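(* Let $Y$ be a finite-dimensional real or complex vector space, $\mathfrak g\subset\mathfrak{gl}(Y)$ a Lie subalgebra closed under $(S,T)\mapsto U_TS:=TST$, and $\omega$ a bilinear form on $Y$ with $\omega(Tx,y)+\omega(x,Ty)=0$ for all $T\in\mathfrak g$, $x,y\in Y$. Define $F\colon Y\to\mathfrak g^*$ by $\langle F(y),T\rangle=\tfrac12\omega(Ty,y)$, let $\alpha\colon\mathfrak g^*\to\mathfrak g$ and $f(y)=\alpha(F(y))y$. Let nonzero $b_1,\dots,b_s$ and $h>0$ be given and suppose $y_0,y_1,Y_1,\dots,Y_s\in Y$ satisfy \[ Y_i = y_0 + h\sum_{j=1}^{i-1} b_j f(Y_j) + \frac h2 b_i f(Y_i),\qquad y_1 = y_0 + h\sum_{i=1}^s b_i f(Y_i). \] Then $z_0=F(y_0)$, $Z_i=F(Y_i)$, $z_1=F(y_1)$ satisfy \[ Z_i = z_0 - h\sum_{j=1}^{i-1} b_j\operatorname{ad}^*_{\alpha(Z_j)}Z_j - \frac h2 b_i\operatorname{ad}^*_{\alpha(Z_i)}Z_i + \frac{h^2}{4}b_i^2U^*_{\alpha(Z_i)}Z_i,\qquad z_1 = z_0 - h\sum_{i=1}^s b_i\operatorname{ad}^*_{\alpha(Z_i)}Z_i . \]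
   Context: $\langle\cdot,\cdot\rangle$ is the pairing between $\mathfrak g^*$ and $\mathfrak g$; the bracket is $[S,T]=ST-TS$. $\operatorname{ad}^*_Tz\in\mathfrak g^*$ is defined by $\langle\operatorname{ad}^*_Tz,S\rangle=\langle z,[T,S]\rangle$ and $U^*_Tz$ by $\langle U^*_Tz,S\rangle=\langle z,TST\rangle$ for all $S\in\mathfrak g$. *)

theory Defs
  imports "HOL-Analysis.Analysis"
begin

text \<open>Y = 'k^'n (finite-dimensional vector space over 'k, with 'k real or complex,
  generalised to any real_normed_field); gl(Y) = 'k^'n^'n.\<close>

definition mscale :: "'k::real_normed_field \<Rightarrow> 'k^'n^'n \<Rightarrow> 'k^'n^'n" where
  "mscale c A = (\<chi> i j. c * A$i$j)"

definition bracket :: "'k::real_normed_field^'n^'n \<Rightarrow> 'k^'n^'n \<Rightarrow> 'k^'n^'n" where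
  "bracket S T = S ** T - T ** S"

definition lie_subalgebra :: "('k::real_normed_field^'n^'n) set \<Rightarrow> bool" where
  "lie_subalgebra g \<longleftrightarrow> 0 \<in> g \<and> (\<forall>S\<in>g. \<forall>T\<in>g. S + T \<in> g) \<and>
     (\<forall>c. \<forall>S\<in>g. mscale c S \<in> g) \<and> (\<forall>S\<in>g. \<forall>T\<in>g. bracket S T \<in> g)"

definition bilinear_form :: "('k::real_normed_field^'n \<Rightarrow> 'k^'n \<Rightarrow> 'k) \<Rightarrow> bool" where
  "bilinear_form w \<longleftrightarrow>
     (\<forall>x x' y. w (x + x') y = w x y + w x' y) \<and> (\<forall>c x y. w (c *s x) y = c * w x y) \<and>
     (\<forall>x y y'. w x (y + y') = w x y + w x y') \<and> (\<forall>c x y. w x (c *s y) = c * w x y)"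

text \<open>The dual space g^*: linear functionals on g, represented as functions on gl(Y)
  vanishing outside g.\<close>
definition dual :: "('k::real_normed_field^'n^'n) set \<Rightarrow> ('k^'n^'n \<Rightarrow> 'k) set" where
  "dual g = {z. (\<forall>S\<in>g. \<forall>T\<in>g. z (S + T) = z S + z T) \<and> (\<forall>c. \<forall>S\<in>g. z (mscale c S) = c * z S)
               \<and> (\<forall>S. S \<notin> g \<longrightarrow> z S = 0)}"

definition momap :: "('k::real_normed_field^'n^'n) set \<Rightarrow> ('k^'n \<Rightarrow> 'k^'n \<Rightarrow> 'k) \<Rightarrow> 'k^'n \<Rightarrow> ('k^'n^'n \<Rightarrow> 'k)" where
  "momap g w y = (\<lambda>T. if T \<in> g then w (T *v y) y / 2 else 0)"

definition ad_star :: "('k::real_normed_field^'n^'n) set \<Rightarrow> 'k^'n^'n \<Rightarrow> ('k^'n^'n \<Rightarrow> 'k) \<Rightarrow> ('k^'n^'n \<Rightarrow> 'k)" where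
  "ad_star g T z = (\<lambda>S. if S \<in> g then z (bracket T S) else 0)"

definition U_star :: "('k::real_normed_field^'n^'n) set \<Rightarrow> 'k^'n^'n \<Rightarrow> ('k^'n^'n \<Rightarrow> 'k) \<Rightarrow> ('k^'n^'n \<Rightarrow> 'k)" where
  "U_star g T z = (\<lambda>S. if S \<in> g then z (T ** S ** T) else 0)"

end

theory Submission
  imports Defs
begin

text \<open>For \<open>S \<in> \<mathfrak>g\<close> the value \<open>\<langle>F(y), S\<rangle> = \<omega>(Sy, y)/2\<close> is a quadratic form in \<open>y\<close>, so
  expanding \<open>F(Y \<pm> c A Y)\<close> and moving \<open>A\<close> across \<omega> by invariance gives
  \<open>F(Y \<pm> c A Y) = F(Y) \<mp> c ad\<^sup>*\<^sub>A F(Y) - c\<^sup>2 U\<^sup>*\<^sub>A F(Y)\<close> for every \<open>A \<in> \<mathfrak>g\<close>.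
  Each stage is a midpoint step: with \<open>c = h b\<^sub>i/2\<close> and \<open>X\<^sub>i = y\<^sub>0 + h \<Sum>\<^sub>j\<^sub><\<^sub>i b\<^sub>j f(Y\<^sub>j)\<close>
  one has \<open>Y\<^sub>i = X\<^sub>i + c f(Y\<^sub>i)\<close> and \<open>X\<^sub>i\<^sub>+\<^sub>1 = Y\<^sub>i + c f(Y\<^sub>i)\<close>, so the \<open>U\<^sup>*\<close> terms cancel in
  \<open>F(X\<^sub>i\<^sub>+\<^sub>1) - F(X\<^sub>i)\<close> and the claim follows by telescoping. Only \<open>\<alpha>(z) \<in> \<mathfrak>g\<close> is used
  about \<open>\<alpha>\<close>.\<close>

lemma bilinear_formD:
  assumes "bilinear_form w"
  shows "w (x + x') y = w x y + w x' y" "w (c *s x) y = c * w x y"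
    and "w x (y + y') = w x y + w x y'" "w x (c *s y) = c * w x y"
  using assms unfolding bilinear_form_def by blast+

lemma bilinear_form_diff_left:
  assumes "bilinear_form w"
  shows "w (x - x') y = w x y - w x' y"
  using bilinear_formD(1)[OF assms, of "x - x'" x' y] by simp

lemma mscale_matrix_vector_mult: "mscale c S *v y = c *s (S *v y)"
  by (simp add: vec_eq_iff matrix_vector_mult_def mscale_def sum_distrib_left mult.assoc)

locale invariant_form =
  fixes g :: "('k::real_normed_field^'n^'n) set" and w :: "'k^'n \<Rightarrow> 'k^'n \<Rightarrow> 'k"
  assumes lie: "lie_subalgebra g"
    and U_closed: "\<forall>S\<in>g. \<forall>T\<in>g. T ** S ** T \<in> g"
    and bilinear: "bilinear_form w"
    and invariant: "\<forall>T\<in>g. \<forall>x y. w (T *v x) y + w x (T *v y) = 0"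
begin

lemma invariant_left: "T \<in> g \<Longrightarrow> w (T *v x) y = - w x (T *v y)"
  using invariant by (simp add: eq_neg_iff_add_eq_0)

lemma momap_in_dual: "momap g w y \<in> dual g"
  using lie unfolding dual_def momap_def lie_subalgebra_def
  by (auto simp: matrix_vector_mult_add_rdistrib mscale_matrix_vector_mult
      bilinear_formD[OF bilinear] add_divide_distrib)

lemma ad_star_momap:
  assumes "A \<in> g" "S \<in> g"
  shows "ad_star g A (momap g w y) S = - (w (S *v y) (A *v y) + w (S *v (A *v y)) y) / 2"
proof -
  have "bracket A S \<in> g"
    using lie assms unfolding lie_subalgebra_def by blast
  moreover have "w (bracket A S *v y) y = - (w (S *v y) (A *v y) + w (S *v (A *v y)) y)"
    unfolding bracket_def
    by (simp add: matrix_vector_mult_diff_rdistrib bilinear_form_diff_left[OF bilinear]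
        invariant_left[OF assms(1)] flip: matrix_vector_mul_assoc)
  ultimately show ?thesis
    using assms by (simp add: ad_star_def momap_def)
qed

lemma U_star_momap:
  assumes "A \<in> g" "S \<in> g"
  shows "U_star g A (momap g w y) S = - w (S *v (A *v y)) (A *v y) / 2"
proof -
  have "A ** S ** A \<in> g"
    using U_closed assms by blast
  moreover have "w ((A ** S ** A) *v y) y = - w (S *v (A *v y)) (A *v y)"
    by (simp add: invariant_left[OF assms(1)] flip: matrix_vector_mul_assoc)
  ultimately show ?thesis
    using assms by (simp add: U_star_def momap_def)
qed

lemma momap_add_scaled:
  assumes "A \<in> g"
  shows "momap g w (y + c *s (A *v y)) S
    = momap g w y S - c * ad_star g A (momap g w y) S - c\<^sup>2 * U_star g A (momap g w y) S"
proof (cases "S \<in> g")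
  case False
  then show ?thesis by (simp add: momap_def ad_star_def U_star_def)
next
  case True
  have "S *v (y + c *s (A *v y)) = S *v y + c *s (S *v (A *v y))"
    by (simp add: matrix_vector_right_distrib vector_scalar_commute)
  then show ?thesis
    unfolding ad_star_momap[OF assms True] U_star_momap[OF assms True]
    using True by (simp add: momap_def bilinear_formD[OF bilinear] algebra_simps
        add_divide_distrib diff_divide_distrib power2_eq_square)
qed

lemma momap_midpoint_stage:
  assumes "A \<in> g" and Y: "Y = X + c *s (A *v Y)"
  shows "momap g w Y S
      = momap g w X S - c * ad_star g A (momap g w Y) S + c\<^sup>2 * U_star g A (momap g w Y) S"
    and "momap g w (Y + c *s (A *v Y)) S = momap g w X S - 2 * c * ad_star g A (momap g w Y) S"
proof -
  have "X = Y - c *s (A *v Y)"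
    using Y by (metis add_diff_cancel_right')
  then have "X = Y + (- c) *s (A *v Y)"
    by (simp add: vector_smult_lneg)
  then have "momap g w X S
      = momap g w Y S + c * ad_star g A (momap g w Y) S - c\<^sup>2 * U_star g A (momap g w Y) S"
    using momap_add_scaled[OF assms(1), of Y "- c" S] by simp
  then show "momap g w Y S
      = momap g w X S - c * ad_star g A (momap g w Y) S + c\<^sup>2 * U_star g A (momap g w Y) S"
    and "momap g w (Y + c *s (A *v Y)) S = momap g w X S - 2 * c * ad_star g A (momap g w Y) S"
    by (simp_all add: momap_add_scaled[OF assms(1)])
qed

lemma momap_stages:
  fixes a :: "nat \<Rightarrow> 'k" and A :: "nat \<Rightarrow> 'k^'n^'n"
  assumes A_g: "\<forall>i\<in>{1..s}. A i \<in> g"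
    and stages: "\<forall>i\<in>{1..s}.
      Yv i = y0 + (\<Sum>j\<in>{1..<i}. a j *s (A j *v Yv j)) + (a i / 2) *s (A i *v Yv i)"
    and update: "y1 = y0 + (\<Sum>i\<in>{1..s}. a i *s (A i *v Yv i))"
  shows "\<And>i. i \<in> {1..s} \<Longrightarrow> momap g w (Yv i) S = momap g w y0 S
      - (\<Sum>j\<in>{1..<i}. a j * ad_star g (A j) (momap g w (Yv j)) S)
      - a i / 2 * ad_star g (A i) (momap g w (Yv i)) S
      + (a i)\<^sup>2 / 4 * U_star g (A i) (momap g w (Yv i)) S"
    and "momap g w y1 S
      = momap g w y0 S - (\<Sum>i\<in>{1..s}. a i * ad_star g (A i) (momap g w (Yv i)) S)"
proof -
  define X where "X i = y0 + (\<Sum>j\<in>{1..<i}. a j *s (A j *v Yv j))" for i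
  let ?ad = "\<lambda>j. ad_star g (A j) (momap g w (Yv j)) S"
  have Y_X: "Yv i = X i + (a i / 2) *s (A i *v Yv i)" if "i \<in> {1..s}" for i
    using stages that by (simp add: X_def)
  have X_Suc: "X (Suc i) = Yv i + (a i / 2) *s (A i *v Yv i)" if "i \<in> {1..s}" for i
  proof -
    have "a i *s (A i *v Yv i) = (a i / 2) *s (A i *v Yv i) + (a i / 2) *s (A i *v Yv i)"
      by (simp flip: vector_sadd_rdistrib)
    moreover have "X (Suc i) = X i + a i *s (A i *v Yv i)"
      using that by (simp add: X_def add.assoc)
    ultimately show ?thesis
      using Y_X[OF that] by (metis add.assoc)
  qed
  have X_step: "momap g w (X (Suc j)) S - momap g w (X j) S = - (a j * ?ad j)"
    if "j \<in> {1..s}" for j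
    using momap_midpoint_stage(2)[OF bspec[OF A_g that] Y_X[OF that], of S] that
    by (simp add: X_Suc)
  have X_momap: "momap g w (X i) S = momap g w y0 S - (\<Sum>j\<in>{1..<i}. a j * ?ad j)"
    if "i \<in> {1..Suc s}" for i
  proof -
    have "momap g w (X i) S - momap g w (X 1) S
        = (\<Sum>j\<in>{1..<i}. momap g w (X (Suc j)) S - momap g w (X j) S)"
      using that by (intro sum_Suc_diff'[symmetric]) simp
    also have "\<dots> = (\<Sum>j\<in>{1..<i}. - (a j * ?ad j))"
      using that by (intro sum.cong) (auto simp: X_step)
    finally show ?thesis
      by (simp add: X_def sum_negf algebra_simps)
  qed
  show "momap g w (Yv i) S = momap g w y0 S
      - (\<Sum>j\<in>{1..<i}. a j * ?ad j) - a i / 2 * ?ad i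
      + (a i)\<^sup>2 / 4 * U_star g (A i) (momap g w (Yv i)) S" if i: "i \<in> {1..s}" for i
    using momap_midpoint_stage(1)[OF bspec[OF A_g i] Y_X[OF i], of S] X_momap[of i] i
    by (simp add: power_divide)
  have "y1 = X (Suc s)"
    by (simp add: X_def update atLeastLessThanSuc_atLeastAtMost)
  then show "momap g w y1 S = momap g w y0 S - (\<Sum>i\<in>{1..s}. a i * ?ad i)"
    using X_momap[of "Suc s"] by (simp add: atLeastLessThanSuc_atLeastAtMost)
qed

end

theorem corollary3p9:
  fixes g :: "('k::real_normed_field^'n^'n) set"
    and w :: "'k^'n \<Rightarrow> 'k^'n \<Rightarrow> 'k"
    and \<alpha> :: "('k^'n^'n \<Rightarrow> 'k) \<Rightarrow> 'k^'n^'n"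
    and b :: "nat \<Rightarrow> real" and h :: real and s :: nat
    and y0 y1 :: "'k^'n" and Yv :: "nat \<Rightarrow> 'k^'n"
  assumes g_lie: "lie_subalgebra g"
    and g_U: "\<forall>S\<in>g. \<forall>T\<in>g. T ** S ** T \<in> g"
    and w_bil: "bilinear_form w"
    and w_inv: "\<forall>T\<in>g. \<forall>x y. w (T *v x) y + w x (T *v y) = 0"
    and \<alpha>_into: "\<forall>z\<in>dual g. \<alpha> z \<in> g"
    and b_nz: "\<forall>i\<in>{1..s}. b i \<noteq> 0"
    and h_pos: "h > 0"
    and stages: "\<forall>i\<in>{1..s}. Yv i = y0
        + of_real h *s (\<Sum>j\<in>{1..<i}. of_real (b j) *s (\<alpha> (momap g w (Yv j)) *v Yv j))
        + (of_real h / 2 * of_real (b i)) *s (\<alpha> (momap g w (Yv i)) *v Yv i)"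
    and update: "y1 = y0 + of_real h *s (\<Sum>i\<in>{1..s}. of_real (b i) *s (\<alpha> (momap g w (Yv i)) *v Yv i))"
  shows "(\<forall>i\<in>{1..s}. momap g w (Yv i) = (\<lambda>S. momap g w y0 S
           - of_real h * (\<Sum>j\<in>{1..<i}. of_real (b j) * ad_star g (\<alpha> (momap g w (Yv j))) (momap g w (Yv j)) S)
           - of_real h / 2 * of_real (b i) * ad_star g (\<alpha> (momap g w (Yv i))) (momap g w (Yv i)) S
           + of_real h ^ 2 / 4 * of_real (b i) ^ 2 * U_star g (\<alpha> (momap g w (Yv i))) (momap g w (Yv i)) S))
     \<and> momap g w y1 = (\<lambda>S. momap g w y0 S
           - of_real h * (\<Sum>i\<in>{1..s}. of_real (b i) * ad_star g (\<alpha> (momap g w (Yv i))) (momap g w (Yv i)) S))"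
proof -
  interpret invariant_form g w
    using g_lie g_U w_bil w_inv by unfold_locales
  define A where "A j = \<alpha> (momap g w (Yv j))" for j
  define a :: "nat \<Rightarrow> 'k" where "a j = of_real h * of_real (b j)" for j
  have A_g: "\<forall>i\<in>{1..s}. A i \<in> g"
    using \<alpha>_into momap_in_dual by (simp add: A_def)
  have sum_a: "of_real h *s (\<Sum>j\<in>J. of_real (b j) *s (A j *v Yv j))
      = (\<Sum>j\<in>J. a j *s (A j *v Yv j))" for J :: "nat set"
    by (simp add: a_def vector_smult_assoc flip: sum_cmul)
  have half: "of_real h / 2 * of_real (b i) = a i / 2" for i
    by (simp add: a_def)
  have stages_a: "\<forall>i\<in>{1..s}.
      Yv i = y0 + (\<Sum>j\<in>{1..<i}. a j *s (A j *v Yv j)) + (a i / 2) *s (A i *v Yv i)"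
    using stages unfolding A_def sum_a[unfolded A_def] half .
  have update_a: "y1 = y0 + (\<Sum>i\<in>{1..s}. a i *s (A i *v Yv i))"
    using update unfolding A_def sum_a[unfolded A_def] .
  show ?thesis
    using momap_stages[OF A_g stages_a update_a]
    by (simp add: fun_eq_iff A_def a_def sum_distrib_left mult.assoc power_mult_distrib)
qed

end
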